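(* Let $I=\langle N,M,V\rangle$ be an ordered instance of goods. If there is a good $g\in M$ such that at most one agent in $N$ does not have an MMS partition in which the bundle containing $g$ has cardinality two, then there exist an agent $i\in N$ and a good $g'\in M\setminus\{g\}$ such that allocating $\{g,g'\}$ to $i$ is a valid reduction.
   Context: An instance $I=\langle N,M,V\rangle$ has agents $N=\{1,\dots,n\}$, goods $M=\{1,\dots,m\}$ and additive valuations $v_i$ with $v_i(\emptyset)=0$, $v_i(S)=\sum_{g\in S}v_i(\{g\})$, $v_{ij}:=v_i(\{j\})\ge 0$. It is ordered if $v_{ij}\ge v_{i(j+1)}$ for all $i$ and $1\le j<m$. An allocation ($n$-partition) is an ordered $n$-tuple of pairwise disjoint, possibly empty subsets of $M$ with union $M$. The maximin share of $i$ in $I$ is $\mu_i^I=\max_A\min_j v_i(A_j)$ over all allocations; an MMS partition of $i$ is an allocation $A$ with $v_i(A_j)\ge\mu_i^I$ for all $j$. Removing agents $N'\subseteq N$ and items $M'\subseteq M$ is a valid reduction if the items of $M'$ can be allocated to the agents of $N'$ so that each $i'\in N'$ receives a bundle $B_{i'}$ with $v_{i'}(B_{i'})\ge\mu_{i'}^I$, and every $i\in N\setminus N'$ satisfies $\mu_i^{I'}\ge\mu_i^I$, where $I'=\langle N\setminus N', M\setminus M', V\rangle$ (valuations restricted, maximin share computed with $|N\setminus N'|$ bundles). "Allocating $B$ to $i$ is a valid reduction" means this holds with $N'=\{i\}$, $M'=B$. *)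

theory Defs
  imports Complex_Main
begin

(* Agents are 1..n, goods are 1..m; v i j = value of agent i for good j. *)

definition val :: "(nat \<Rightarrow> nat \<Rightarrow> real) \<Rightarrow> nat \<Rightarrow> nat set \<Rightarrow> real" where
  "val v i B = (\<Sum>g\<in>B. v i g)"

definition is_partition :: "nat \<Rightarrow> nat set \<Rightarrow> (nat \<Rightarrow> nat set) \<Rightarrow> bool" where
  "is_partition k S A \<longleftrightarrow>
     (\<forall>j\<in>{1..k}. A j \<subseteq> S) \<and> (\<Union>j\<in>{1..k}. A j) = S \<and>
     (\<forall>j\<in>{1..k}. \<forall>j'\<in>{1..k}. j \<noteq> j' \<longrightarrow> A j \<inter> A j' = {})"

definition mms :: "(nat \<Rightarrow> nat \<Rightarrow> real) \<Rightarrow> nat \<Rightarrow> nat set \<Rightarrow> nat \<Rightarrow> real" where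
  "mms v k S i = Max {Min ((\<lambda>j. val v i (A j)) ` {1..k}) | A. is_partition k S A}"

definition is_mms_partition ::
  "(nat \<Rightarrow> nat \<Rightarrow> real) \<Rightarrow> nat \<Rightarrow> nat \<Rightarrow> nat \<Rightarrow> (nat \<Rightarrow> nat set) \<Rightarrow> bool" where
  "is_mms_partition v n m i A \<longleftrightarrow> is_partition n {1..m} A \<and>
     (\<forall>j\<in>{1..n}. val v i (A j) \<ge> mms v n {1..m} i)"

definition ordered_instance :: "(nat \<Rightarrow> nat \<Rightarrow> real) \<Rightarrow> nat \<Rightarrow> nat \<Rightarrow> bool" where
  "ordered_instance v n m \<longleftrightarrow>
     (\<forall>i\<in>{1..n}. \<forall>j\<in>{1..m}. v i j \<ge> 0) \<and>
     (\<forall>i\<in>{1..n}. \<forall>j. 1 \<le> j \<and> j < m \<longrightarrow> v i j \<ge> v i (j + 1))"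

definition valid_reduction_single ::
  "(nat \<Rightarrow> nat \<Rightarrow> real) \<Rightarrow> nat \<Rightarrow> nat \<Rightarrow> nat \<Rightarrow> nat set \<Rightarrow> bool" where
  "valid_reduction_single v n m i B \<longleftrightarrow>
     val v i B \<ge> mms v n {1..m} i \<and>
     (\<forall>i'\<in>{1..n} - {i}. mms v (n - 1) ({1..m} - B) i' \<ge> mms v n {1..m} i')"

end

theory Submission
  imports Defs "HOL-Library.FuncSet"
begin

(* Call h a partner of agent i if some MMS partition of i has the bundle {g, h}, and let g' be
   the partner of largest index; in an ordered instance nobody values g' more than any partner h.
   Removing {g, g'} costs an agent nothing if, in one of its MMS partitions, the rest of the bundle
   of g is worth at least g': merge that rest into the bundle containing g' and drop the bundle of
   g. This applies to every agent with a partner h, where the rest is {h}; an agent for which it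
   fails values {g, g'} above its bundle of g, so {g, g'} meets its MMS. At most one agent lacks a
   partner, so either that agent loses its MMS and accepts {g, g'}, or the agent whose partner is
   g' accepts the pair and nobody loses. *)

lemma card_2_ex_other:
  assumes "card X = 2" "x \<in> X"
  shows "\<exists>y. y \<noteq> x \<and> X = {x, y}"
proof -
  obtain a b where X: "X = {a, b}" "a \<noteq> b"
    using assms(1) unfolding card_2_iff by blast
  then have "x = a \<or> x = b"
    using assms(2) by blast
  then show ?thesis
  proof
    assume "x = a"
    then show ?thesis using X by auto
  next
    assume "x = b"
    then have "a \<noteq> x \<and> X = {x, a}" using X by (simp add: insert_commute)
    then show ?thesis by blast
  qed
qed

lemma ex_member_Q_others_P:
  assumes "finite B" "card B \<le> 1" "a \<in> N" "Q a"
    and "\<forall>j\<in>N - B. P j" "\<forall>j\<in>N. P j \<or> Q j"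
  shows "\<exists>k\<in>N. Q k \<and> (\<forall>j\<in>N - {k}. P j)"
proof (cases "\<forall>j\<in>N - {a}. P j")
  case False
  then obtain k where k: "k \<in> N" "\<not> P k" by blast
  then have "k \<in> B"
    using assms(5) by blast
  then have "B \<subseteq> {k}"
    using card_le_Suc0_iff_eq[OF assms(1)] assms(2) by auto
  then show ?thesis using k assms(5,6) by blast
qed (use assms(3,4) in blast)

lemma bij_betw_if_eq_last:
  fixes b n :: nat
  assumes b: "b \<in> {1..n}"
  shows "bij_betw (\<lambda>j. if j = b then n else j) {1..n - 1} ({1..n} - {b})"
proof (rule bij_betwI[where g = "\<lambda>k. if k = n then b else k"])
  show "(\<lambda>j. if j = b then n else j) \<in> {1..n - 1} \<rightarrow> {1..n} - {b}"
  proof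
    fix j assume "j \<in> {1..n - 1}"
    then show "(if j = b then n else j) \<in> {1..n} - {b}" using b by (cases "j = b") auto
  qed
  show "(\<lambda>k. if k = n then b else k) \<in> {1..n} - {b} \<rightarrow> {1..n - 1}"
  proof
    fix k assume "k \<in> {1..n} - {b}"
    then show "(if k = n then b else k) \<in> {1..n - 1}" using b by (cases "k = n") auto
  qed
  show "(if (if j = b then n else j) = n then b else if j = b then n else j) = j"
    if "j \<in> {1..n - 1}" for j
    using b that by auto
  show "(if (if k = n then b else k) = b then n else if k = n then b else k) = k"
    if "k \<in> {1..n} - {b}" for k
    using that by auto
qed

lemma is_partition_merge:
  assumes P: "is_partition n S P" and bd: "b \<in> {1..n}" "d \<in> {1..n}" "b \<noteq> d"
  shows "is_partition n S (P(d := P d \<union> P b, b := {}))" (is "is_partition n S ?Q")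
  unfolding is_partition_def
proof (intro conjI ballI impI)
  fix j assume "j \<in> {1..n}"
  then show "?Q j \<subseteq> S" using P bd unfolding is_partition_def by auto
next
  have "x \<in> (\<Union>j\<in>{1..n}. ?Q j)" if "x \<in> P k" "k \<in> {1..n}" for x k
    using that bd by (cases "k = b"; cases "k = d") force+
  then show "(\<Union>j\<in>{1..n}. ?Q j) = S" using P bd unfolding is_partition_def by auto
next
  fix j j' assume "j \<in> {1..n}" "j' \<in> {1..n}" "j \<noteq> j'"
  then show "?Q j \<inter> ?Q j' = {}"
    using P bd unfolding is_partition_def by (simp add: Int_Un_distrib Int_Un_distrib2)
qed

lemma is_partition_Diff:
  "is_partition n S P \<Longrightarrow> is_partition n (S - X) (\<lambda>j. P j - X)"
  unfolding is_partition_def by blast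

lemma is_partition_drop_bundle:
  assumes P: "is_partition n S P" and b: "b \<in> {1..n}"
  shows "is_partition (n - 1) (S - P b) (\<lambda>j. P (if j = b then n else j))"
proof -
  let ?\<sigma> = "\<lambda>j. if j = b then n else j"
  have \<sigma>: "bij_betw ?\<sigma> {1..n - 1} ({1..n} - {b})"
    using b by (rule bij_betw_if_eq_last)
  then have img: "?\<sigma> ` {1..n - 1} = {1..n} - {b}"
    by (simp add: bij_betw_def)
  have rest: "(\<Union>k\<in>{1..n} - {b}. P k) = S - P b"
    using P b unfolding is_partition_def by blast
  show ?thesis
    unfolding is_partition_def
  proof (intro conjI ballI impI)
    fix j assume "j \<in> {1..n - 1}"
    then have "?\<sigma> j \<in> {1..n} - {b}" using img by blast
    then show "P (?\<sigma> j) \<subseteq> S - P b" using rest by blast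
  next
    show "(\<Union>j\<in>{1..n - 1}. P (?\<sigma> j)) = S - P b"
      unfolding rest[symmetric] img[symmetric] image_image ..
  next
    fix j j' assume "j \<in> {1..n - 1}" "j' \<in> {1..n - 1}" "j \<noteq> j'"
    then have "?\<sigma> j \<noteq> ?\<sigma> j'" "?\<sigma> j \<in> {1..n}" "?\<sigma> j' \<in> {1..n}"
      using \<sigma> img unfolding bij_betw_def inj_on_def by blast+
    then show "P (?\<sigma> j) \<inter> P (?\<sigma> j') = {}"
      using P unfolding is_partition_def by blast
  qed
qed

lemma finite_partition_minima:
  assumes "finite S"
  shows "finite {Min ((\<lambda>j. val v i (A j)) ` {1..k}) | A. is_partition k S A}"
proof -
  have "{Min ((\<lambda>j. val v i (A j)) ` {1..k}) | A. is_partition k S A}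
     \<subseteq> (\<lambda>f. Min ((\<lambda>j. val v i (f j)) ` {1..k})) ` ({1..k} \<rightarrow>\<^sub>E Pow S)"
  proof
    fix x assume "x \<in> {Min ((\<lambda>j. val v i (A j)) ` {1..k}) | A. is_partition k S A}"
    then obtain A where x: "x = Min ((\<lambda>j. val v i (A j)) ` {1..k})" and A: "is_partition k S A"
      by blast
    have "restrict A {1..k} \<in> {1..k} \<rightarrow>\<^sub>E Pow S"
      using A unfolding is_partition_def by auto
    moreover have "x = Min ((\<lambda>j. val v i (restrict A {1..k} j)) ` {1..k})"
      using x by (auto intro!: arg_cong[where f = Min] image_cong)
    ultimately show "x \<in> (\<lambda>f. Min ((\<lambda>j. val v i (f j)) ` {1..k})) ` ({1..k} \<rightarrow>\<^sub>E Pow S)"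
      by blast
  qed
  then show ?thesis
    by (rule finite_subset) (simp add: finite_PiE assms)
qed

lemma mms_geI:
  assumes "finite S" "k \<ge> 1" "is_partition k S A" "\<forall>j\<in>{1..k}. \<mu> \<le> val v i (A j)"
  shows "\<mu> \<le> mms v k S i"
proof -
  have "\<mu> \<le> Min ((\<lambda>j. val v i (A j)) ` {1..k})"
    using assms(2,4) by (subst Min_ge_iff) auto
  also have "\<dots> \<le> mms v k S i"
    unfolding mms_def using assms(3) by (intro Max_ge finite_partition_minima assms(1)) blast
  finally show ?thesis .
qed

lemma mms_partition_exists:
  assumes "finite S" "k \<ge> 1"
  shows "\<exists>A. is_partition k S A \<and> (\<forall>j\<in>{1..k}. mms v k S i \<le> val v i (A j))"
proof -
  have "is_partition k S (\<lambda>j. if j = 1 then S else {})"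
    unfolding is_partition_def using assms(2) by auto
  then have "{Min ((\<lambda>j. val v i (A j)) ` {1..k}) | A. is_partition k S A} \<noteq> {}"
    by blast
  then have "mms v k S i \<in> {Min ((\<lambda>j. val v i (A j)) ` {1..k}) | A. is_partition k S A}"
    unfolding mms_def by (rule Max_in[OF finite_partition_minima[OF assms(1)]])
  then obtain A where A: "is_partition k S A" "mms v k S i = Min ((\<lambda>j. val v i (A j)) ` {1..k})"
    by blast
  then have "\<forall>j\<in>{1..k}. mms v k S i \<le> val v i (A j)"
    by (auto intro: Min_le)
  with A(1) show ?thesis by blast
qed

lemma mms_Diff_pair_ge:
  assumes P: "is_partition n S P" and "finite S" "n \<ge> 2"
    and b: "b \<in> {1..n}" "g \<in> P b" and g': "g' \<in> S" "g' \<noteq> g"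
    and small: "v i g' \<le> val v i (P b - {g})"
    and big: "\<forall>j\<in>{1..n}. \<mu> \<le> val v i (P j)"
  shows "\<mu> \<le> mms v (n - 1) (S - {g, g'}) i"
proof -
  have Psub: "P j \<subseteq> S" if "j \<in> {1..n}" for j
    using P that unfolding is_partition_def by blast
  have Pdisj: "P j \<inter> P k = {}" if "j \<in> {1..n}" "k \<in> {1..n}" "j \<noteq> k" for j k
    using P that unfolding is_partition_def by blast
  obtain d where d: "d \<in> {1..n}" "d \<noteq> b" "g' \<in> P d \<union> P b"
  proof -
    obtain c where c: "c \<in> {1..n}" "g' \<in> P c"
      using P g' unfolding is_partition_def by blast
    show thesis
    proof (cases "c = b")
      case True
      then show thesis using that[of "if b = 1 then 2 else 1"] b c \<open>n \<ge> 2\<close> by auto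
    qed (use that c in blast)
  qed
  define Q where "Q j = (P(d := P d \<union> P b, b := {})) j - {g, g'}" for j
  have "is_partition n (S - {g, g'}) Q"
    unfolding Q_def using P b(1) d(1,2) by (intro is_partition_Diff is_partition_merge) auto
  then have part: "is_partition (n - 1) (S - {g, g'}) (\<lambda>j. Q (if j = b then n else j))"
    using is_partition_drop_bundle[OF _ b(1)] d(2) by (fastforce simp: Q_def)
  have "\<mu> \<le> val v i (Q k)" if k: "k \<in> {1..n}" "k \<noteq> b" for k
  proof (cases "k = d")
    case True
    have fin: "finite (P d)" "finite (P b)"
      using Psub b(1) d(1) \<open>finite S\<close> finite_subset by blast+
    have "val v i (Q d) = val v i (P d \<union> P b) - val v i {g, g'}"
      unfolding Q_def val_def using fin d b g' by (subst sum_diff) auto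
    also have "\<dots> = val v i (P d) + (val v i (P b - {g}) - v i g')"
      unfolding val_def using fin d b g' Pdisj[OF d(1) b(1) d(2)]
      by (simp add: sum.union_disjoint sum_diff1)
    also have "\<dots> \<ge> val v i (P d)" using small by simp
    finally show ?thesis using big d(1) True by force
  next
    case False
    have "g \<notin> P k" "g' \<notin> P k"
      using Pdisj[OF k(1) b(1) k(2)] Pdisj[OF k(1) d(1) False] b(2) d(3) by blast+
    then have "Q k = P k" using k False by (auto simp: Q_def)
    then show ?thesis using big k by simp
  qed
  then have "\<forall>j\<in>{1..n - 1}. \<mu> \<le> val v i (Q (if j = b then n else j))"
    using b(1) by auto
  then show ?thesis
    using mms_geI[OF _ _ part] \<open>finite S\<close> \<open>n \<ge> 2\<close> by simp
qed

lemma mms_Diff_pair_ge_or_val_pair_ge: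
  assumes "finite S" "n \<ge> 2" "g \<in> S" "g' \<in> S" "g' \<noteq> g"
  shows "mms v n S i \<le> mms v (n - 1) (S - {g, g'}) i \<or> mms v n S i \<le> val v i {g, g'}"
proof -
  obtain P where P: "is_partition n S P" "\<forall>j\<in>{1..n}. mms v n S i \<le> val v i (P j)"
    using mms_partition_exists[of S n v i] assms(1,2) by auto
  obtain b where b: "b \<in> {1..n}" "g \<in> P b"
    using P(1) assms(3) unfolding is_partition_def by blast
  show ?thesis
  proof (cases "v i g' \<le> val v i (P b - {g})")
    case True
    then show ?thesis using mms_Diff_pair_ge[OF P(1) assms(1,2) b assms(4,5) True P(2)] by blast
  next
    case False
    have "P b \<subseteq> S"
      using P(1) b(1) unfolding is_partition_def by blast
    then have "finite (P b)"
      using assms(1) by (rule finite_subset)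
    then have "val v i (P b) = val v i (P b - {g}) + v i g"
      using b(2) unfolding val_def by (simp add: sum_diff1)
    moreover have "val v i {g, g'} = v i g + v i g'"
      using assms(5) unfolding val_def by simp
    ultimately show ?thesis using False P(2) b(1) by force
  qed
qed

lemma ordered_instance_antimono:
  assumes "ordered_instance v n m" "i \<in> {1..n}" "1 \<le> a" "a \<le> b" "b \<le> m"
  shows "v i b \<le> v i a"
proof -
  have decr: "v i (k + 1) \<le> v i k" if "1 \<le> k" "k < m" for k
    using assms(1,2) that unfolding ordered_instance_def by blast
  show ?thesis
    using assms(4,5)
  proof (induction b rule: dec_induct)
    case (step k)
    then show ?case using decr[of k] assms(3) by simp
  qed simp
qed

definition mms_pair_partner ::
  "(nat \<Rightarrow> nat \<Rightarrow> real) \<Rightarrow> nat \<Rightarrow> nat \<Rightarrow> nat \<Rightarrow> nat \<Rightarrow> nat \<Rightarrow> bool" where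
  "mms_pair_partner v n m i g h \<longleftrightarrow>
     h \<noteq> g \<and> (\<exists>A. is_mms_partition v n m i A \<and> (\<exists>b\<in>{1..n}. A b = {g, h}))"

lemma ex_mms_pair_partner:
  assumes "is_mms_partition v n m i A" "b \<in> {1..n}" "g \<in> A b" "card (A b) = 2"
  shows "\<exists>h. mms_pair_partner v n m i g h"
proof -
  obtain h where "h \<noteq> g" "A b = {g, h}"
    using card_2_ex_other[OF assms(4,3)] by blast
  then show ?thesis
    using assms(1,2) unfolding mms_pair_partner_def by blast
qed

lemma mms_pair_partner_mem:
  assumes "mms_pair_partner v n m i g h"
  shows "h \<in> {1..m} - {g}"
proof -
  obtain A b where A: "is_mms_partition v n m i A" "b \<in> {1..n}" "A b = {g, h}" "h \<noteq> g"
    using assms unfolding mms_pair_partner_def by blast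
  then have "A b \<subseteq> {1..m}"
    unfolding is_mms_partition_def is_partition_def by blast
  then show ?thesis
    using A(3,4) by simp
qed

lemma mms_le_val_pair_partner:
  assumes "mms_pair_partner v n m i g h"
  shows "mms v n {1..m} i \<le> val v i {g, h}"
  using assms unfolding mms_pair_partner_def is_mms_partition_def by metis

lemma mms_Diff_pair_ge_if_partner_le:
  assumes ord: "ordered_instance v n m" and "n \<ge> 2" "i \<in> {1..n}"
    and h: "mms_pair_partner v n m i g h" and g': "h \<le> g'" "g' \<in> {1..m} - {g}"
  shows "mms v n {1..m} i \<le> mms v (n - 1) ({1..m} - {g, g'}) i"
proof -
  obtain A b where A: "is_mms_partition v n m i A" "b \<in> {1..n}" "A b = {g, h}" "h \<noteq> g"
    using h unfolding mms_pair_partner_def by blast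
  have "h \<in> {1..m}"
    using mms_pair_partner_mem[OF h] by blast
  then have "v i g' \<le> v i h"
    using ordered_instance_antimono[OF ord \<open>i \<in> {1..n}\<close>] g' by auto
  also have "v i h = val v i (A b - {g})"
    using A(3,4) unfolding val_def by (simp add: insert_Diff_if)
  finally show ?thesis
    using A \<open>n \<ge> 2\<close> g' unfolding is_mms_partition_def
    by (intro mms_Diff_pair_ge[where P = A and b = b]) auto
qed

lemma obtain_least_valuable_partner:
  assumes "ordered_instance v n m" "n \<ge> 2" "G \<subseteq> {1..n}" "G \<noteq> {}"
    and partner: "\<forall>i\<in>G. \<exists>h. mms_pair_partner v n m i g h"
  obtains i g' where "i \<in> G" "g' \<in> {1..m} - {g}" "mms v n {1..m} i \<le> val v i {g, g'}"
    "\<forall>j\<in>G. mms v n {1..m} j \<le> mms v (n - 1) ({1..m} - {g, g'}) j"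
proof -
  define H where "H = {h. \<exists>i\<in>G. mms_pair_partner v n m i g h}"
  have "H \<subseteq> {1..m}"
    unfolding H_def using mms_pair_partner_mem by blast
  then have "finite H"
    by (rule finite_subset) simp
  moreover have "H \<noteq> {}"
    using assms(4) partner unfolding H_def by blast
  ultimately have "Max H \<in> H"
    by (rule Max_in)
  then obtain i where i: "i \<in> G" "mms_pair_partner v n m i g (Max H)"
    unfolding H_def by blast
  have "mms v n {1..m} j \<le> mms v (n - 1) ({1..m} - {g, Max H}) j" if j: "j \<in> G" for j
  proof -
    obtain h where h: "mms_pair_partner v n m j g h"
      using bspec[OF partner j] ..
    then have "h \<le> Max H"
      using \<open>finite H\<close> j unfolding H_def by (blast intro: Max_ge)
    then show ?thesis
      using mms_Diff_pair_ge_if_partner_le[OF assms(1,2) _ h] mms_pair_partner_mem[OF i(2)]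
        j assms(3) by blast
  qed
  then show thesis
    using that[OF i(1) mms_pair_partner_mem[OF i(2)] mms_le_val_pair_partner[OF i(2)]] by blast
qed

theorem lemma22:
  fixes v :: "nat \<Rightarrow> nat \<Rightarrow> real" and n m :: nat and g :: nat
  assumes "n \<ge> 2"
    and "ordered_instance v n m"
    and "g \<in> {1..m}"
    and "card {i\<in>{1..n}. \<not> (\<exists>A. is_mms_partition v n m i A \<and>
                 (\<exists>j\<in>{1..n}. g \<in> A j \<and> card (A j) = 2))} \<le> 1"
  shows "\<exists>i\<in>{1..n}. \<exists>g'\<in>{1..m} - {g}. valid_reduction_single v n m i {g, g'}"
proof -
  define Bad where "Bad = {i\<in>{1..n}. \<not> (\<exists>A. is_mms_partition v n m i A \<and>
                 (\<exists>j\<in>{1..n}. g \<in> A j \<and> card (A j) = 2))}"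
  have Bad: "finite Bad" "card Bad \<le> 1"
    using assms(4) unfolding Bad_def by simp_all
  have "\<not> {1..n} \<subseteq> Bad"
  proof
    assume "{1..n} \<subseteq> Bad"
    then have "card {1..n} \<le> card Bad"
      by (rule card_mono[OF Bad(1)])
    then show False
      using Bad(2) assms(1) by simp
  qed
  moreover have "\<forall>i\<in>{1..n} - Bad. \<exists>h. mms_pair_partner v n m i g h"
    unfolding Bad_def using ex_mms_pair_partner by blast
  ultimately obtain i g' where i: "i \<in> {1..n} - Bad" and g': "g' \<in> {1..m} - {g}"
    and accepts: "mms v n {1..m} i \<le> val v i {g, g'}"
    and keeps: "\<forall>j\<in>{1..n} - Bad. mms v n {1..m} j \<le> mms v (n - 1) ({1..m} - {g, g'}) j"
    using obtain_least_valuable_partner[OF assms(2,1), of "{1..n} - Bad" g] by blast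
  have "\<forall>j\<in>{1..n}. mms v n {1..m} j \<le> mms v (n - 1) ({1..m} - {g, g'}) j \<or>
      mms v n {1..m} j \<le> val v j {g, g'}"
    using mms_Diff_pair_ge_or_val_pair_ge[of "{1..m}" n g g'] assms(1,3) g' by simp
  from ex_member_Q_others_P[OF Bad _ accepts keeps this] i
  show ?thesis
    using g' unfolding valid_reduction_single_def by blast
qed

end
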